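(* Let $\ell_1,\ell_2\in H_1(\mathbb{C}^2)$ be fixed, non-proportional linear forms. Then a general binary quartic $p\in H_4(\mathbb{C}^2)$ has exactly two representations $$p(x,y) = (t_1x^2+t_2xy+t_3y^2)^2 + t_4\,\ell_1(x,y)^4 + t_5\,\ell_2(x,y)^4, \qquad t_i\in\mathbb{C}.$$
   Context: $H_d(\mathbb{C}^n)$ denotes the complex vector space of homogeneous polynomials of degree $d$ in $n$ variables. "A general $p$ has property P" means P holds for all $p$ in a nonempty Zariski-open subset of $H_d(\mathbb{C}^n)$. Two representations are considered the same if they agree up to replacing the quadratic form by its negative. *)

theory Defs
  imports "HOL-Analysis.Analysis"
begin

inductive_set poly_fun :: "((complex ^ 'n) \<Rightarrow> complex) set" where
  pf_const: "(\<lambda>_. c) \<in> poly_fun"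
| pf_coord: "(\<lambda>x. x $ i) \<in> poly_fun"
| pf_add: "f \<in> poly_fun \<Longrightarrow> g \<in> poly_fun \<Longrightarrow> (\<lambda>x. f x + g x) \<in> poly_fun"
| pf_mult: "f \<in> poly_fun \<Longrightarrow> g \<in> poly_fun \<Longrightarrow> (\<lambda>x. f x * g x) \<in> poly_fun"

definition zariski_closed :: "(complex ^ 'n) set \<Rightarrow> bool" where
  "zariski_closed S \<longleftrightarrow> (\<exists>F \<subseteq> poly_fun. S = {x. \<forall>f\<in>F. f x = 0})"

definition zariski_open :: "(complex ^ 'n) set \<Rightarrow> bool" where
  "zariski_open U \<longleftrightarrow> zariski_closed (- U)"

text \<open>H_4(C^2) is identified with complex^5 via coefficients:
  p(x,y) = c0 x^4 + c1 x^3 y + c2 x^2 y^2 + c3 x y^3 + c4 y^4.\<close>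
definition quartic_eval :: "complex ^ 5 \<Rightarrow> complex \<Rightarrow> complex \<Rightarrow> complex" where
  "quartic_eval c x y = c $ 0 * x ^ 4 + c $ 1 * x ^ 3 * y + c $ 2 * x ^ 2 * y ^ 2
      + c $ 3 * x * y ^ 3 + c $ 4 * y ^ 4"

text \<open>H_1(C^2): a linear form l = (a,b) means l(x,y) = a x + b y.\<close>
definition lin_eval :: "complex \<times> complex \<Rightarrow> complex \<Rightarrow> complex \<Rightarrow> complex" where
  "lin_eval l x y = fst l * x + snd l * y"

definition reps :: "complex \<times> complex \<Rightarrow> complex \<times> complex \<Rightarrow> complex ^ 5
     \<Rightarrow> (complex \<times> complex \<times> complex \<times> complex \<times> complex) set" where
  "reps l1 l2 c = {(t1, t2, t3, t4, t5). \<forall>x y.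
      quartic_eval c x y = (t1 * x ^ 2 + t2 * x * y + t3 * y ^ 2) ^ 2
        + t4 * (lin_eval l1 x y) ^ 4 + t5 * (lin_eval l2 x y) ^ 4}"

text \<open>Representations are identified up to replacing the quadratic form by its
  negative; rep_class maps a tuple to its equivalence class.\<close>
fun rep_class :: "complex \<times> complex \<times> complex \<times> complex \<times> complex
     \<Rightarrow> (complex \<times> complex \<times> complex) set \<times> complex \<times> complex" where
  "rep_class (t1, t2, t3, t4, t5) = ({(t1, t2, t3), (-t1, -t2, -t3)}, t4, t5)"

end

theory Submission
  imports Defs "HOL-Computational_Algebra.Polynomial"
begin

(* Write l1 = (a,b), l2 = (e,f) and form_det = a f - b e, which is nonzero.
   The linear substitution x = f u - b v, y = -e u + a v is invertible and turns l1, l2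
   into form_det * u and form_det * v.  In the new coordinates a representation reads
     P(u,v) = (s1 u^2 + s2 u v + s3 v^2)^2 + t4 (form_det u)^4 + t5 (form_det v)^4,
   where P0..P4 are the coefficients of the pulled-back quartic P and (s1,s2,s3) is the
   pulled-back quadratic form.  Comparing coefficients of u^3v, u^2v^2, uv^3 gives
     2 s1 s2 = P1,   s2^2 + 2 s1 s3 = P2,   2 s2 s3 = P3,
   and those of u^4, v^4 then determine t4, t5.  If P1 P3 (P2^2 - 2 P1 P3) is nonzero,
   the system forces s1 = P1/(2 s2), s3 = P3/(2 s2) with s2 one of the four distinct
   roots +-r1, +-r2 of z^4 - P2 z^2 + P1 P3 / 2.  Flipping the sign of s2 negates the
   quadratic form, so the representations form exactly two classes. *)


subsection \<open>Polynomial functions and Zariski-open sets\<close>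

lemma poly_fun_diff:
  "f \<in> poly_fun \<Longrightarrow> g \<in> poly_fun \<Longrightarrow> (\<lambda>x. f x - g x) \<in> poly_fun"
proof -
  assume "f \<in> poly_fun" "g \<in> poly_fun"
  then have "(\<lambda>x. f x + (\<lambda>_. -1) x * g x) \<in> poly_fun"
    by (intro poly_fun.pf_add poly_fun.pf_mult poly_fun.pf_const)
  then show ?thesis by simp
qed

lemma poly_fun_power: "f \<in> poly_fun \<Longrightarrow> (\<lambda>x. f x ^ n) \<in> poly_fun"
proof (induction n)
  case 0
  then show ?case using poly_fun.pf_const[of 1] by simp
next
  case (Suc n)
  then have "(\<lambda>x. f x * f x ^ n) \<in> poly_fun" by (intro poly_fun.pf_mult)
  then show ?case by simp
qed

lemma zariski_open_nonvanishing:
  assumes "g \<in> poly_fun"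
  shows "zariski_open {x. g x \<noteq> 0}"
  unfolding zariski_open_def zariski_closed_def
  using assms by (intro exI[of _ "{g}"]) auto


lemma binary_quartic_zero_iff:
  fixes e0 e1 e2 e3 e4 :: complex
  shows "(\<forall>u v. e0 * u^4 + e1 * u^3 * v + e2 * u^2 * v^2 + e3 * u * v^3 + e4 * v^4 = 0)
     \<longleftrightarrow> e0 = 0 \<and> e1 = 0 \<and> e2 = 0 \<and> e3 = 0 \<and> e4 = 0"
proof
  assume vanish: "\<forall>u v. e0 * u^4 + e1 * u^3 * v + e2 * u^2 * v^2 + e3 * u * v^3 + e4 * v^4 = 0"
  have "poly [:e4, e3, e2, e1, e0:] u = 0" for u
    using vanish[rule_format, of u 1]
    by (simp add: algebra_simps power2_eq_square power3_eq_cube power4_eq_xxxx)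
  then have "[:e4, e3, e2, e1, e0:] = 0"
    using poly_all_0_iff_0 by blast
  then show "e0 = 0 \<and> e1 = 0 \<and> e2 = 0 \<and> e3 = 0 \<and> e4 = 0" by simp
qed simp


lemma biquadratic_roots:
  fixes \<beta> \<gamma> :: complex
  assumes disc: "\<beta>^2 \<noteq> 4 * \<gamma>"
  obtains r1 r2 where "r1^2 \<noteq> r2^2"
    and "\<And>z. z^4 + \<beta> * z^2 + \<gamma> = 0 \<longleftrightarrow> z \<in> {r1, -r1, r2, -r2}"
proof -
  define d where "d = csqrt (\<beta>^2 - 4 * \<gamma>)"
  define r1 where "r1 = csqrt ((- \<beta> + d) / 2)"
  define r2 where "r2 = csqrt ((- \<beta> - d) / 2)"
  have d_sq: "d^2 = \<beta>^2 - 4 * \<gamma>" unfolding d_def by simp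
  have factor: "z^4 + \<beta> * z^2 + \<gamma> = (z^2 - r1^2) * (z^2 - r2^2)" for z
    unfolding r1_def r2_def power2_csqrt using d_sq
    by (simp add: field_simps power2_eq_square power4_eq_xxxx)
  have "d \<noteq> 0" using d_sq disc by auto
  then have "r1^2 \<noteq> r2^2" unfolding r1_def r2_def power2_csqrt by (simp add: field_simps)
  moreover have "z^4 + \<beta> * z^2 + \<gamma> = 0 \<longleftrightarrow> z \<in> {r1, -r1, r2, -r2}" for z
    unfolding factor by (auto simp: power2_eq_iff)
  ultimately show thesis using that by blast
qed


lemma square_system_iff:
  fixes p1 p2 p3 s1 s2 s3 :: "'a :: field_char_0"
  assumes p1: "p1 \<noteq> 0"
  shows "(2 * s1 * s2 = p1 \<and> s2^2 + 2 * s1 * s3 = p2 \<and> 2 * s2 * s3 = p3)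
    \<longleftrightarrow> (s2 \<noteq> 0 \<and> s2^4 - p2 * s2^2 + p1 * p3 / 2 = 0
         \<and> s1 = p1 / (2 * s2) \<and> s3 = p3 / (2 * s2))"
proof
  assume eqs: "2 * s1 * s2 = p1 \<and> s2^2 + 2 * s1 * s3 = p2 \<and> 2 * s2 * s3 = p3"
  then have "s2 \<noteq> 0" using p1 by auto
  moreover have "s2^4 - p2 * s2^2 + p1 * p3 / 2 = 0"
    using eqs by (auto simp: algebra_simps power2_eq_square power4_eq_xxxx)
  ultimately show "s2 \<noteq> 0 \<and> s2^4 - p2 * s2^2 + p1 * p3 / 2 = 0
      \<and> s1 = p1 / (2 * s2) \<and> s3 = p3 / (2 * s2)"
    using eqs by (auto simp: field_simps)
next
  assume sol: "s2 \<noteq> 0 \<and> s2^4 - p2 * s2^2 + p1 * p3 / 2 = 0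
      \<and> s1 = p1 / (2 * s2) \<and> s3 = p3 / (2 * s2)"
  then have "p2 * s2^2 = s2^2 * s2^2 + p1 * p3 / 2"
    by (simp add: algebra_simps power4_eq_xxxx power2_eq_square)
  then show "2 * s1 * s2 = p1 \<and> s2^2 + 2 * s1 * s3 = p2 \<and> 2 * s2 * s3 = p3"
    using sol by (auto simp: field_simps power2_eq_square)
qed


subsection \<open>The coordinate change adapted to two linear forms\<close>

text \<open>Throughout, \<open>l1 = (a,b)\<close>, \<open>l2 = (e,f)\<close>, and \<open>x = f u - b v\<close>, \<open>y = -e u + a v\<close>.\<close>
context
  fixes a b e f :: complex
begin

abbreviation form_det :: complex where
  "form_det \<equiv> a * f - b * e"

text \<open>Coefficients of the quartic with coefficient vector \<open>c\<close> after the substitution.\<close>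
definition quart_pull0 :: "complex ^ 5 \<Rightarrow> complex" where
  "quart_pull0 c = c $ 0 * f^4 - c $ 1 * e * f^3 + c $ 2 * e^2 * f^2 - c $ 3 * e^3 * f
     + c $ 4 * e^4"
definition quart_pull1 :: "complex ^ 5 \<Rightarrow> complex" where
  "quart_pull1 c = c $ 1 * (3 * b * e * f^2 + a * f^3) - c $ 0 * (4 * b * f^3)
     - c $ 2 * (2 * b * e^2 * f + 2 * a * e * f^2) + c $ 3 * (b * e^3 + 3 * a * e^2 * f)
     - c $ 4 * (4 * a * e^3)"
definition quart_pull2 :: "complex ^ 5 \<Rightarrow> complex" where
  "quart_pull2 c = c $ 0 * (6 * b^2 * f^2) - c $ 1 * (3 * b^2 * e * f + 3 * a * b * f^2)
     + c $ 2 * (b^2 * e^2 + 4 * a * b * e * f + a^2 * f^2)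
     - c $ 3 * (3 * a * b * e^2 + 3 * a^2 * e * f) + c $ 4 * (6 * a^2 * e^2)"
definition quart_pull3 :: "complex ^ 5 \<Rightarrow> complex" where
  "quart_pull3 c = c $ 1 * (b^3 * e + 3 * a * b^2 * f) - c $ 0 * (4 * b^3 * f)
     - c $ 2 * (2 * a * b^2 * e + 2 * a^2 * b * f) + c $ 3 * (3 * a^2 * b * e + a^3 * f)
     - c $ 4 * (4 * a^3 * e)"
definition quart_pull4 :: "complex ^ 5 \<Rightarrow> complex" where
  "quart_pull4 c = c $ 0 * b^4 - c $ 1 * a * b^3 + c $ 2 * a^2 * b^2 - c $ 3 * a^3 * b
     + c $ 4 * a^4"

text \<open>Coefficients of the quadratic form \<open>t1 x\<^sup>2 + t2 x y + t3 y\<^sup>2\<close> after the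
  substitution, and the inverse transformation.\<close>
definition quad_pull1 :: "complex \<Rightarrow> complex \<Rightarrow> complex \<Rightarrow> complex" where
  "quad_pull1 t1 t2 t3 = t1 * f^2 - t2 * e * f + t3 * e^2"
definition quad_pull2 :: "complex \<Rightarrow> complex \<Rightarrow> complex \<Rightarrow> complex" where
  "quad_pull2 t1 t2 t3 = t2 * (a * f + b * e) - 2 * b * f * t1 - 2 * a * e * t3"
definition quad_pull3 :: "complex \<Rightarrow> complex \<Rightarrow> complex \<Rightarrow> complex" where
  "quad_pull3 t1 t2 t3 = t1 * b^2 - t2 * a * b + t3 * a^2"

definition quad_push1 :: "complex \<Rightarrow> complex \<Rightarrow> complex \<Rightarrow> complex" where
  "quad_push1 s1 s2 s3 = (s1 * a^2 + s2 * a * e + s3 * e^2) / form_det^2"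
definition quad_push2 :: "complex \<Rightarrow> complex \<Rightarrow> complex \<Rightarrow> complex" where
  "quad_push2 s1 s2 s3 = (2 * s1 * a * b + s2 * (a * f + b * e) + 2 * s3 * e * f) / form_det^2"
definition quad_push3 :: "complex \<Rightarrow> complex \<Rightarrow> complex \<Rightarrow> complex" where
  "quad_push3 s1 s2 s3 = (s1 * b^2 + s2 * b * f + s3 * f^2) / form_det^2"

lemma quartic_subst:
  "quartic_eval c (f * u - b * v) (- e * u + a * v) =
     quart_pull0 c * u^4 + quart_pull1 c * u^3 * v + quart_pull2 c * u^2 * v^2
     + quart_pull3 c * u * v^3 + quart_pull4 c * v^4"
  unfolding quartic_eval_def quart_pull0_def quart_pull1_def quart_pull2_def
    quart_pull3_def quart_pull4_def
  by algebra

lemma quad_subst: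
  "t1 * (f * u - b * v)^2 + t2 * (f * u - b * v) * (- e * u + a * v) + t3 * (- e * u + a * v)^2
     = quad_pull1 t1 t2 t3 * u^2 + quad_pull2 t1 t2 t3 * u * v + quad_pull3 t1 t2 t3 * v^2"
  unfolding quad_pull1_def quad_pull2_def quad_pull3_def by algebra

lemma lin_subst:
  "lin_eval (a, b) (f * u - b * v) (- e * u + a * v) = form_det * u"
  "lin_eval (e, f) (f * u - b * v) (- e * u + a * v) = form_det * v"
  unfolding lin_eval_def by (simp_all add: algebra_simps)

lemma quad_pull2_minus: "quad_pull2 (- t1) (- t2) (- t3) = - quad_pull2 t1 t2 t3"
  unfolding quad_pull2_def by (simp add: algebra_simps)

lemma quad_push_minus:
  "quad_push1 (- s1) (- s2) (- s3) = - quad_push1 s1 s2 s3"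
  "quad_push2 (- s1) (- s2) (- s3) = - quad_push2 s1 s2 s3"
  "quad_push3 (- s1) (- s2) (- s3) = - quad_push3 s1 s2 s3"
  unfolding quad_push1_def quad_push2_def quad_push3_def
  by (simp_all add: minus_divide_left algebra_simps)

text \<open>The candidate representation attached to a root \<open>r\<close> of the biquadratic: its
  transformed quadratic form is \<open>(p1/(2r), r, p3/(2r))\<close>, and \<open>t4, t5\<close> are forced.\<close>
definition rep_of :: "complex ^ 5 \<Rightarrow> complex \<Rightarrow> complex \<times> complex \<times> complex \<times> complex \<times> complex"
  where "rep_of c r =
    (let s1 = quart_pull1 c / (2 * r); s3 = quart_pull3 c / (2 * r)
     in (quad_push1 s1 r s3, quad_push2 s1 r s3, quad_push3 s1 r s3,
         (quart_pull0 c - s1^2) / form_det^4, (quart_pull4 c - s3^2) / form_det^4))"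

lemma rep_class_rep_of_minus: "rep_class (rep_of c (- r)) = rep_class (rep_of c r)"
proof -
  have "quart_pull1 c / (2 * - r) = - (quart_pull1 c / (2 * r))"
       "quart_pull3 c / (2 * - r) = - (quart_pull3 c / (2 * r))" by simp_all
  then show ?thesis unfolding rep_of_def Let_def by (simp add: quad_push_minus insert_commute)
qed

text \<open>A witness quartic in the generic set: the coefficients of \<open>l1\<^sup>3 l2 + l1 l2\<^sup>3\<close>,
  which becomes \<open>form_det\<^sup>4 (u\<^sup>3 v + u v\<^sup>3)\<close> after the substitution.\<close>
definition generic_witness :: "complex ^ 5" where
  "generic_witness = (\<chi> i. if i = 0 then a * e^3 + a^3 * e
     else if i = 1 then b * e^3 + 3 * a * e^2 * f + 3 * a^2 * b * e + a^3 * f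
     else if i = 2 then 3 * b * e^2 * f + 3 * a * e * f^2 + 3 * a * b^2 * e + 3 * a^2 * b * f
     else if i = 3 then 3 * b * e * f^2 + b^3 * e + a * f^3 + 3 * a * b^2 * f
     else b * f^3 + b^3 * f)"

lemma generic_witness_pull:
  "quart_pull1 generic_witness = form_det^4"
  "quart_pull2 generic_witness = 0"
  "quart_pull3 generic_witness = form_det^4"
  unfolding quart_pull1_def quart_pull2_def quart_pull3_def generic_witness_def
  by (simp_all; algebra)+

lemma genericity_poly_fun:
  "(\<lambda>c. quart_pull1 c * quart_pull3 c * ((quart_pull2 c)^2 - 2 * quart_pull1 c * quart_pull3 c))
     \<in> poly_fun"
  unfolding quart_pull1_def quart_pull2_def quart_pull3_def
  by (intro poly_fun.pf_add poly_fun.pf_mult poly_fun_diff poly_fun_power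
      poly_fun.pf_coord poly_fun.pf_const)


subsection \<open>Representations in the new coordinates\<close>

context
  assumes det_nonzero: "form_det \<noteq> 0"
begin

lemma all_subst_iff:
  "(\<forall>x y. P x y) \<longleftrightarrow> (\<forall>u v. P (f * u - b * v) (- e * u + a * v))"
proof (intro iffI allI)
  fix x y
  assume all_uv: "\<forall>u v. P (f * u - b * v) (- e * u + a * v)"
  define u where "u = (a * x + b * y) / form_det"
  define v where "v = (e * x + f * y) / form_det"
  have "f * u - b * v = x" "- e * u + a * v = y"
    unfolding u_def v_def using det_nonzero
    by (simp_all add: divide_simps) (simp_all add: algebra_simps)
  then show "P x y" using all_uv by metis
qed simp

lemma quad_pull_push:
  "quad_pull1 (quad_push1 s1 s2 s3) (quad_push2 s1 s2 s3) (quad_push3 s1 s2 s3) = s1"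
  "quad_pull2 (quad_push1 s1 s2 s3) (quad_push2 s1 s2 s3) (quad_push3 s1 s2 s3) = s2"
  "quad_pull3 (quad_push1 s1 s2 s3) (quad_push2 s1 s2 s3) (quad_push3 s1 s2 s3) = s3"
  using det_nonzero
  unfolding quad_pull1_def quad_pull2_def quad_pull3_def quad_push1_def quad_push2_def quad_push3_def
  by (simp_all add: field_simps; algebra)+

lemma quad_push_pull:
  "quad_push1 (quad_pull1 t1 t2 t3) (quad_pull2 t1 t2 t3) (quad_pull3 t1 t2 t3) = t1"
  "quad_push2 (quad_pull1 t1 t2 t3) (quad_pull2 t1 t2 t3) (quad_pull3 t1 t2 t3) = t2"
  "quad_push3 (quad_pull1 t1 t2 t3) (quad_pull2 t1 t2 t3) (quad_pull3 t1 t2 t3) = t3"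
  using det_nonzero
  unfolding quad_pull1_def quad_pull2_def quad_pull3_def quad_push1_def quad_push2_def quad_push3_def
  by (simp_all add: field_simps; algebra)+

lemma reps_iff_coeff_eqs:
  "(t1, t2, t3, t4, t5) \<in> reps (a, b) (e, f) c \<longleftrightarrow>
    (let s1 = quad_pull1 t1 t2 t3; s2 = quad_pull2 t1 t2 t3; s3 = quad_pull3 t1 t2 t3 in
       2 * s1 * s2 = quart_pull1 c \<and> s2^2 + 2 * s1 * s3 = quart_pull2 c \<and>
       2 * s2 * s3 = quart_pull3 c \<and>
       s1^2 + t4 * form_det^4 = quart_pull0 c \<and> s3^2 + t5 * form_det^4 = quart_pull4 c)"
  (is "_ \<longleftrightarrow> ?coeff_eqs")
proof -
  define s1 where "s1 = quad_pull1 t1 t2 t3"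
  define s2 where "s2 = quad_pull2 t1 t2 t3"
  define s3 where "s3 = quad_pull3 t1 t2 t3"
  define rep_eq where "rep_eq x y \<longleftrightarrow> quartic_eval c x y =
    (t1 * x^2 + t2 * x * y + t3 * y^2)^2 + t4 * lin_eval (a, b) x y ^ 4 + t5 * lin_eval (e, f) x y ^ 4"
    for x y
  have difference: "quartic_eval c (f * u - b * v) (- e * u + a * v)
      - ((t1 * (f * u - b * v)^2 + t2 * (f * u - b * v) * (- e * u + a * v)
          + t3 * (- e * u + a * v)^2)^2
        + t4 * lin_eval (a, b) (f * u - b * v) (- e * u + a * v) ^ 4
        + t5 * lin_eval (e, f) (f * u - b * v) (- e * u + a * v) ^ 4)
    = (quart_pull0 c - s1^2 - t4 * form_det^4) * u^4 + (quart_pull1 c - 2 * s1 * s2) * u^3 * v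
      + (quart_pull2 c - s2^2 - 2 * s1 * s3) * u^2 * v^2 + (quart_pull3 c - 2 * s2 * s3) * u * v^3
      + (quart_pull4 c - s3^2 - t5 * form_det^4) * v^4" for u v
    unfolding quartic_subst quad_subst lin_subst s1_def s2_def s3_def by algebra
  have "(t1, t2, t3, t4, t5) \<in> reps (a, b) (e, f) c \<longleftrightarrow> (\<forall>x y. rep_eq x y)"
    unfolding reps_def rep_eq_def by simp
  also have "\<dots> \<longleftrightarrow> (\<forall>u v. rep_eq (f * u - b * v) (- e * u + a * v))"
    by (rule all_subst_iff)
  also have "\<dots> \<longleftrightarrow> (\<forall>u v. (quart_pull0 c - s1^2 - t4 * form_det^4) * u^4
      + (quart_pull1 c - 2 * s1 * s2) * u^3 * v + (quart_pull2 c - s2^2 - 2 * s1 * s3) * u^2 * v^2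
      + (quart_pull3 c - 2 * s2 * s3) * u * v^3 + (quart_pull4 c - s3^2 - t5 * form_det^4) * v^4 = 0)"
    unfolding rep_eq_def difference[symmetric] by simp
  also have "\<dots> \<longleftrightarrow> ?coeff_eqs"
    unfolding binary_quartic_zero_iff s1_def[symmetric] s2_def[symmetric] s3_def[symmetric] Let_def
    by (auto simp: algebra_simps)
  finally show ?thesis .
qed

lemma reps_eq_rep_of_image:
  assumes p1: "quart_pull1 c \<noteq> 0" and p3: "quart_pull3 c \<noteq> 0"
  shows "reps (a, b) (e, f) c = rep_of c `
    {z. z^4 - quart_pull2 c * z^2 + quart_pull1 c * quart_pull3 c / 2 = 0}"
    (is "_ = rep_of c ` ?roots")
proof (intro set_eqI iffI)
  fix t
  assume t_rep: "t \<in> reps (a, b) (e, f) c"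
  obtain t1 t2 t3 t4 t5 where t: "t = (t1, t2, t3, t4, t5)" by (cases t) auto
  define s1 where "s1 = quad_pull1 t1 t2 t3"
  define s2 where "s2 = quad_pull2 t1 t2 t3"
  define s3 where "s3 = quad_pull3 t1 t2 t3"
  have "2 * s1 * s2 = quart_pull1 c \<and> s2^2 + 2 * s1 * s3 = quart_pull2 c \<and> 2 * s2 * s3 = quart_pull3 c"
    and t4: "s1^2 + t4 * form_det^4 = quart_pull0 c" and t5: "s3^2 + t5 * form_det^4 = quart_pull4 c"
    using t_rep unfolding t reps_iff_coeff_eqs s1_def s2_def s3_def Let_def by auto
  then have s2: "s2 \<in> ?roots" and s1: "s1 = quart_pull1 c / (2 * s2)"
    and s3: "s3 = quart_pull3 c / (2 * s2)"
    using square_system_iff[OF p1] by auto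
  have "t1 = quad_push1 s1 s2 s3" "t2 = quad_push2 s1 s2 s3" "t3 = quad_push3 s1 s2 s3"
    unfolding s1_def s2_def s3_def by (simp_all add: quad_push_pull)
  moreover have "t4 = (quart_pull0 c - s1^2) / form_det^4" "t5 = (quart_pull4 c - s3^2) / form_det^4"
    using t4 t5 det_nonzero by (simp_all add: field_simps)
  ultimately have "t = rep_of c s2"
    unfolding t rep_of_def Let_def by (simp add: s1 s3)
  with s2 show "t \<in> rep_of c ` ?roots" by blast
next
  fix t
  assume "t \<in> rep_of c ` ?roots"
  then obtain z where z: "z \<in> ?roots" and t: "t = rep_of c z" by blast
  have "z \<noteq> 0" using z p1 p3 by auto
  then have "2 * (quart_pull1 c / (2 * z)) * z = quart_pull1 c
      \<and> z^2 + 2 * (quart_pull1 c / (2 * z)) * (quart_pull3 c / (2 * z)) = quart_pull2 c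
      \<and> 2 * z * (quart_pull3 c / (2 * z)) = quart_pull3 c"
    using z square_system_iff[OF p1] by blast
  then show "t \<in> reps (a, b) (e, f) c"
    unfolding t rep_of_def Let_def reps_iff_coeff_eqs quad_pull_push
    using det_nonzero by simp
qed

text \<open>Distinct roots give the same class only if they differ by a sign: the middle
  coefficient of the transformed quadratic form recovers the root up to sign.\<close>
lemma rep_class_rep_of_eqD:
  assumes "rep_class (rep_of c r') = rep_class (rep_of c r)"
  shows "r' = r \<or> r' = - r"
proof -
  define q where "q r = (quad_push1 (quart_pull1 c / (2 * r)) r (quart_pull3 c / (2 * r)),
    quad_push2 (quart_pull1 c / (2 * r)) r (quart_pull3 c / (2 * r)),
    quad_push3 (quart_pull1 c / (2 * r)) r (quart_pull3 c / (2 * r)))" for r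
  have middle: "quad_pull2 (fst (q r)) (fst (snd (q r))) (snd (snd (q r))) = r" for r
    unfolding q_def by (simp add: quad_pull_push)
  have "q r' \<in> {q r, (- fst (q r), - fst (snd (q r)), - snd (snd (q r)))}"
    using assms unfolding rep_of_def Let_def q_def by (auto simp: doubleton_eq_iff)
  then show ?thesis
    using middle[of r] middle[of r'] quad_pull2_minus by auto
qed

lemma card_rep_classes:
  assumes p1: "quart_pull1 c \<noteq> 0" and p3: "quart_pull3 c \<noteq> 0"
    and disc: "(quart_pull2 c)^2 - 2 * quart_pull1 c * quart_pull3 c \<noteq> 0"
  shows "card (rep_class ` reps (a, b) (e, f) c) = 2"
proof -
  have "(- quart_pull2 c)^2 \<noteq> 4 * (quart_pull1 c * quart_pull3 c / 2)"
    using disc by (simp add: mult.assoc)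
  then obtain r1 r2 where r12: "r1^2 \<noteq> r2^2"
    and roots: "\<And>z. z^4 + (- quart_pull2 c) * z^2 + quart_pull1 c * quart_pull3 c / 2 = 0
                    \<longleftrightarrow> z \<in> {r1, -r1, r2, -r2}"
    by (rule biquadratic_roots) blast
  have "{z. z^4 - quart_pull2 c * z^2 + quart_pull1 c * quart_pull3 c / 2 = 0} = {r1, -r1, r2, -r2}"
    using roots by auto
  then have classes: "rep_class ` reps (a, b) (e, f) c
      = {rep_class (rep_of c r1), rep_class (rep_of c r2)}"
    unfolding reps_eq_rep_of_image[OF p1 p3] by (auto simp: rep_class_rep_of_minus)
  have "rep_class (rep_of c r2) \<noteq> rep_class (rep_of c r1)"
    using rep_class_rep_of_eqD r12 by fastforce
  then show ?thesis unfolding classes by simp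
qed

end

end


theorem theorem4p7:
  fixes l1 l2 :: "complex \<times> complex"
  assumes "fst l1 * snd l2 - snd l1 * fst l2 \<noteq> 0"
  shows "\<exists>U :: (complex ^ 5) set. zariski_open U \<and> U \<noteq> {} \<and>
           (\<forall>c\<in>U. card (rep_class ` reps l1 l2 c) = 2)"
proof -
  obtain a b e f where l1: "l1 = (a, b)" and l2: "l2 = (e, f)" by (cases l1, cases l2)
  have det: "a * f - b * e \<noteq> 0" using assms l1 l2 by simp
  define U where "U = {c. quart_pull1 a b e f c * quart_pull3 a b e f c
      * ((quart_pull2 a b e f c)^2 - 2 * quart_pull1 a b e f c * quart_pull3 a b e f c) \<noteq> 0}"
  have "zariski_open U"
    unfolding U_def by (rule zariski_open_nonvanishing[OF genericity_poly_fun])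
  moreover have "generic_witness a b e f \<in> U"
    using det by (simp add: U_def generic_witness_pull)
  moreover have "card (rep_class ` reps l1 l2 c) = 2" if "c \<in> U" for c
    using card_rep_classes[OF det] that unfolding U_def l1 l2 by simp
  ultimately show ?thesis by blast
qed

end
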